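(* Let $\mathcal{K}\subseteq\mathbb{R}^d$ be a convex body, $\kappa\in\mathbb{R}^d$, $\nu\in\mathbb{R}$, and let $a_1,\dots,a_\tau\in\mathbb{R}^d$. For $p\in\mathbb{R}^d$ define $u(p,\nu)=\sum_{t=1}^{\tau}\mathbf{1}\{\langle p-\kappa,a_t\rangle+\nu<0\}$, and for an integer $\bar c\ge0$ let $\mathcal{P}(\bar c,\nu)=\{p\in\mathcal{K}:u(p,\nu)\le\bar c\}$. Then every point $p\in\mathrm{conv}(\mathcal{P}(\bar c,\nu))$ satisfies $u(p,\nu)\le\bar c\,(d+1)$.
   Context: In the paper, $a_t=\Pi_{L}x_t$ are projections of contexts onto a subspace $L$, $\kappa$ is the (approximate) centroid of the current knowledge set, and $u(p,\nu)$ is called the $\nu$-margin projected undesirability level of $p$; $\mathrm{conv}$ denotes convex hull. *)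

theory Defs
  imports "HOL-Analysis.Analysis"
begin

definition convex_body :: "'a::euclidean_space set \<Rightarrow> bool" where
  "convex_body K \<longleftrightarrow> compact K \<and> convex K \<and> interior K \<noteq> {}"

definition undesirability ::
  "'a::euclidean_space \<Rightarrow> (nat \<Rightarrow> 'a) \<Rightarrow> nat \<Rightarrow> 'a \<Rightarrow> real \<Rightarrow> nat" where
  "undesirability \<kappa> a \<tau> p \<nu> =
     (\<Sum>t = 1..\<tau>. (if (p - \<kappa>) \<bullet> a t + \<nu> < 0 then 1 else 0))"

definition low_undesirability_set ::
  "'a::euclidean_space set \<Rightarrow> 'a \<Rightarrow> (nat \<Rightarrow> 'a) \<Rightarrow> nat \<Rightarrow> nat \<Rightarrow> real \<Rightarrow> 'a set" where
  "low_undesirability_set K \<kappa> a \<tau> c \<nu> = {p \<in> K. undesirability \<kappa> a \<tau> p \<nu> \<le> c}"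

end

theory Submission
  imports Defs
begin

text \<open>By Caratheodory's theorem a point p of conv(P) lies in the convex hull of at most d + 1
  points of P. A constraint violated at p is violated at one of these points, since the set
  where it holds is a closed halfspace and hence contains the hull of any subset. So u(p) is at
  most the sum of the undesirability levels of these points, each of which is at most c.\<close>

lemma undesirability_eq_card:
  "undesirability \<kappa> a \<tau> p \<nu> = card {t \<in> {1..\<tau>}. (p - \<kappa>) \<bullet> a t + \<nu> < 0}"
  unfolding undesirability_def by (simp add: sum.If_cases Int_def conj_commute)

lemma convex_hull_inner_less_witness:
  fixes S :: "'a::real_inner set"
  assumes "p \<in> convex hull S" "b \<bullet> p < \<beta>"
  shows "\<exists>q\<in>S. b \<bullet> q < \<beta>"
proof (rule ccontr)
  assume "\<not> (\<exists>q\<in>S. b \<bullet> q < \<beta>)"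
  then have "S \<subseteq> {x. \<beta> \<le> b \<bullet> x}" by auto
  then have "convex hull S \<subseteq> {x. \<beta> \<le> b \<bullet> x}"
    by (intro hull_minimal) (simp_all add: convex_halfspace_ge)
  with assms show False by auto
qed

lemma undesirability_convex_hull_le_sum:
  assumes "finite S" "p \<in> convex hull S"
  shows "undesirability \<kappa> a \<tau> p \<nu> \<le> (\<Sum>q\<in>S. undesirability \<kappa> a \<tau> q \<nu>)"
proof -
  define violated where "violated q = {t \<in> {1..\<tau>}. (q - \<kappa>) \<bullet> a t + \<nu> < 0}" for q
  have violated_iff: "(q - \<kappa>) \<bullet> a t + \<nu> < 0 \<longleftrightarrow> a t \<bullet> q < a t \<bullet> \<kappa> - \<nu>" for q t
    by (simp add: inner_diff_left inner_commute[of q "a t"] inner_commute[of \<kappa> "a t"]) linarith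
  have "violated p \<subseteq> (\<Union>q\<in>S. violated q)"
    using convex_hull_inner_less_witness[OF assms(2)] by (auto simp: violated_def violated_iff)
  then have "card (violated p) \<le> card (\<Union>q\<in>S. violated q)"
    by (intro card_mono) (auto simp: violated_def assms(1))
  also have "\<dots> \<le> (\<Sum>q\<in>S. card (violated q))"
    by (rule card_UN_le[OF assms(1)])
  finally show ?thesis
    by (simp add: undesirability_eq_card violated_def)
qed

theorem mainTheorem5:
  fixes K :: "'a::euclidean_space set" and \<kappa> :: 'a and \<nu> :: real
    and a :: "nat \<Rightarrow> 'a" and \<tau> :: nat and c :: nat and p :: 'a
  assumes "convex_body K"
    and "p \<in> convex hull (low_undesirability_set K \<kappa> a \<tau> c \<nu>)"
  shows "undesirability \<kappa> a \<tau> p \<nu> \<le> c * (DIM('a) + 1)"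
proof -
  let ?P = "low_undesirability_set K \<kappa> a \<tau> c \<nu>"
  obtain S where S: "finite S" "S \<subseteq> ?P" "card S \<le> DIM('a) + 1" "p \<in> convex hull S"
    using assms(2) unfolding caratheodory[of ?P] by blast
  have "undesirability \<kappa> a \<tau> p \<nu> \<le> (\<Sum>q\<in>S. undesirability \<kappa> a \<tau> q \<nu>)"
    using undesirability_convex_hull_le_sum[OF S(1,4)] .
  also have "\<dots> \<le> (\<Sum>q\<in>S. c)"
    using S(2) by (intro sum_mono) (auto simp: low_undesirability_set_def)
  also have "\<dots> = card S * c" by simp
  also have "\<dots> \<le> c * (DIM('a) + 1)"
    using mult_le_mono2[OF S(3)] by (simp add: mult.commute)
  finally show ?thesis .
qed

end
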